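(* Let $k,p$ be positive integers, let $G$ be a multigraph, and let $A_1,\ldots,A_p$ be vertex sets contained in $p$ pairwise distinct equivalence classes of $\sim_k$ (with $A_i$ contained in the $i$-th class). Then there is an edge set $X\subseteq E(G)$ with $|X|\le (p-1)(k-1)$ such that for all distinct $i,j\in\{1,\ldots,p\}$ the multigraph $G-X$ contains no $A_i$--$A_j$-path.
   Context: For vertices $u,v$ of a multigraph $G$, $u\sim_k v$ means that either $u=v$ or there are $k$ pairwise edge-disjoint $u$--$v$-paths in $G$; this is an equivalence relation on $V(G)$. $G-X$ denotes $G$ with the edges of $X$ deleted. An $A$--$B$-path is a path with one endvertex in $A$, one in $B$, internally disjoint from $A\cup B$. *)

theory Defs
  imports Main
begin

text \<open>A (finite) multigraph is given by a vertex set V, a set E of edge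
  identifiers and an incidence map inc assigning to each edge its pair of
  endvertices (parallel edges and loops allowed).\<close>

definition multigraph :: "'v set \<Rightarrow> 'e set \<Rightarrow> ('e \<Rightarrow> 'v \<times> 'v) \<Rightarrow> bool" where
  "multigraph V E inc \<longleftrightarrow> finite V \<and> finite E \<and>
     (\<forall>e\<in>E. fst (inc e) \<in> V \<and> snd (inc e) \<in> V)"

definition is_path :: "'v set \<Rightarrow> 'e set \<Rightarrow> ('e \<Rightarrow> 'v \<times> 'v) \<Rightarrow> 'v list \<Rightarrow> 'e list \<Rightarrow> bool" where
  "is_path V E inc vs es \<longleftrightarrow> vs \<noteq> [] \<and> length es = length vs - 1 \<and> distinct vs \<and>
     set vs \<subseteq> V \<and>
     (\<forall>i<length es. es ! i \<in> E \<and>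
        (inc (es ! i) = (vs ! i, vs ! Suc i) \<or> inc (es ! i) = (vs ! Suc i, vs ! i)))"

definition k_equiv :: "'v set \<Rightarrow> 'e set \<Rightarrow> ('e \<Rightarrow> 'v \<times> 'v) \<Rightarrow> nat \<Rightarrow> 'v \<Rightarrow> 'v \<Rightarrow> bool" where
  "k_equiv V E inc k u v \<longleftrightarrow> u = v \<or>
     (\<exists>P :: nat \<Rightarrow> 'v list \<times> 'e list.
        (\<forall>i<k. is_path V E inc (fst (P i)) (snd (P i)) \<and>
               hd (fst (P i)) = u \<and> last (fst (P i)) = v) \<and>
        (\<forall>i<k. \<forall>j<k. i \<noteq> j \<longrightarrow> set (snd (P i)) \<inter> set (snd (P j)) = {}))"

definition AB_path :: "'v set \<Rightarrow> 'e set \<Rightarrow> ('e \<Rightarrow> 'v \<times> 'v) \<Rightarrow> 'v set \<Rightarrow> 'v set \<Rightarrow> 'v list \<Rightarrow> 'e list \<Rightarrow> bool" where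
  "AB_path V E inc A B vs es \<longleftrightarrow> is_path V E inc vs es \<and>
     set vs \<inter> A = {hd vs} \<and> set vs \<inter> B = {last vs}"

end

theory Submission
  imports Defs "HOL-Library.Transitive_Closure_Table"
begin

text \<open>
  The key fact is the edge version of Menger's theorem: if \<open>u \<nsim>\<^sub>k v\<close>, then some vertex set
  containing \<open>u\<close> but not \<open>v\<close> is left by fewer than \<open>k\<close> edges. It is proved with integral unit
  flows: as long as every \<open>u\<close>--\<open>v\<close> cut has at least \<open>k\<close> edges, a flow can be augmented along a
  residual path, and a flow of value \<open>k\<close> is peeled into \<open>k\<close> edge-disjoint paths.
  Such a small cut cannot separate two \<open>\<sim>\<^sub>k\<close>-equivalent vertices, so every \<open>A\<^sub>i\<close> lies on the
  side of its class. Cutting between two classes splits the \<open>p\<close> classes into \<open>p\<^sub>1 + p\<^sub>2\<close>;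
  deleting the cut together with the edge sets obtained recursively for both parts costs
  \<open>(p\<^sub>1 - 1)(k - 1) + (p\<^sub>2 - 1)(k - 1) + (k - 1) = (p - 1)(k - 1)\<close> edges.
\<close>

lemma rtranclp_imp_distinct_path:
  assumes "r\<^sup>*\<^sup>* u v"
  obtains xs where "xs \<noteq> []" "hd xs = u" "last xs = v" "distinct xs"
    "\<forall>i < length xs - 1. r (xs ! i) (xs ! Suc i)"
proof -
  obtain ys where "rtrancl_path r u ys v"
    using assms by (auto simp: rtranclp_eq_rtrancl_path)
  then obtain ys' where p: "rtrancl_path r u ys' v" and d: "distinct (u # ys')"
    by (rule rtrancl_path_distinct)
  have "last (u # ys') = v"
    using p rtrancl_path_last[OF p] by (cases ys') (auto elim: rtrancl_path.cases)
  moreover have "\<forall>i < length ys'. r ((u # ys') ! i) ((u # ys') ! Suc i)"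
    using rtrancl_path_nth[OF p] by simp
  ultimately show thesis using d by (intro that[of "u # ys'"]) auto
qed

lemma is_path_distinct_edges:
  assumes "is_path V E inc xs es"
  shows "distinct es"
proof -
  have len: "length es = length xs - 1" and d: "distinct xs"
    and ends: "\<forall>i<length es. inc (es!i) = (xs!i, xs!Suc i) \<or> inc (es!i) = (xs!Suc i, xs!i)"
    using assms by (auto simp: is_path_def)
  have "es ! i \<noteq> es ! j" if "i < j" "j < length es" for i j
  proof -
    have "xs ! i \<noteq> xs ! j" "xs ! i \<noteq> xs ! Suc j"
      using d len that by (simp_all add: nth_eq_iff_index_eq)
    then show ?thesis using ends that by (metis less_trans prod.inject)
  qed
  then show ?thesis
    unfolding distinct_conv_nth by (metis linorder_neqE_nat)
qed

text \<open>An edge \<open>e\<close> with \<open>inc e = (a, b)\<close> and \<open>f e = 1\<close> carries one unit from \<open>a\<close> to \<open>b\<close>;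
  \<open>f e = -1\<close> means the opposite direction.\<close>

definition incidence :: "('e \<Rightarrow> 'v \<times> 'v) \<Rightarrow> 'e \<Rightarrow> 'v \<Rightarrow> int" where
  "incidence inc e x = of_bool (fst (inc e) = x) - of_bool (snd (inc e) = x)"

definition outflow :: "'e set \<Rightarrow> ('e \<Rightarrow> 'v \<times> 'v) \<Rightarrow> ('e \<Rightarrow> int) \<Rightarrow> 'v \<Rightarrow> int" where
  "outflow E inc f x = (\<Sum>e\<in>E. f e * incidence inc e x)"

lemma outflow_add_scaled:
  "outflow E inc (\<lambda>e. f e + \<sigma> * g e) x = outflow E inc f x + \<sigma> * outflow E inc g x"
  by (simp add: outflow_def sum.distrib sum_distrib_left algebra_simps)

lemma sum_outflow:
  assumes "finite E" "finite S"
  shows "(\<Sum>x\<in>S. outflow E inc f x)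
    = (\<Sum>e\<in>E. f e * (of_bool (fst (inc e) \<in> S) - of_bool (snd (inc e) \<in> S)))"
proof -
  have "(\<Sum>x\<in>S. outflow E inc f x) = (\<Sum>e\<in>E. f e * (\<Sum>x\<in>S. incidence inc e x))"
    unfolding outflow_def by (subst sum.swap) (simp add: sum_distrib_left)
  also have "\<dots> = (\<Sum>e\<in>E. f e * (of_bool (fst (inc e) \<in> S) - of_bool (snd (inc e) \<in> S)))"
    using assms unfolding incidence_def by (simp add: sum_subtractf of_bool_def)
  finally show ?thesis .
qed

definition step_sign :: "('e \<Rightarrow> 'v \<times> 'v) \<Rightarrow> 'v list \<Rightarrow> 'e list \<Rightarrow> nat \<Rightarrow> int" where
  "step_sign inc xs es i = (if inc (es ! i) = (xs ! i, xs ! Suc i) then 1 else -1)"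

definition path_flow :: "('e \<Rightarrow> 'v \<times> 'v) \<Rightarrow> 'v list \<Rightarrow> 'e list \<Rightarrow> 'e \<Rightarrow> int" where
  "path_flow inc xs es e = (\<Sum>i<length es. if es ! i = e then step_sign inc xs es i else 0)"

lemma step_sign_cases:
  assumes "is_path V E inc xs es" "i < length es"
  shows "step_sign inc xs es i = 1 \<and> inc (es ! i) = (xs ! i, xs ! Suc i)
    \<or> step_sign inc xs es i = -1 \<and> inc (es ! i) = (xs ! Suc i, xs ! i)"
  using assms unfolding is_path_def step_sign_def by auto

lemma path_flow_nth:
  assumes "is_path V E inc xs es" "i < length es"
  shows "path_flow inc xs es (es ! i) = step_sign inc xs es i"
proof -
  have "path_flow inc xs es (es ! i) = (\<Sum>j<length es. if j = i then step_sign inc xs es j else 0)"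
    unfolding path_flow_def using is_path_distinct_edges[OF assms(1)] assms(2)
    by (intro sum.cong) (auto simp: nth_eq_iff_index_eq)
  then show ?thesis using assms(2) by simp
qed

lemma path_flow_notin: "e \<notin> set es \<Longrightarrow> path_flow inc xs es e = 0"
  unfolding path_flow_def by (intro sum.neutral) auto

lemma outflow_path_flow:
  assumes "finite E" and p: "is_path V E inc xs es"
  shows "outflow E inc (path_flow inc xs es) x = of_bool (hd xs = x) - of_bool (last xs = x)"
proof -
  let ?n = "length es"
  have ne: "xs \<noteq> []" and len: "?n = length xs - 1" and edges: "\<forall>i<?n. es ! i \<in> E"
    using p by (auto simp: is_path_def)
  have step: "step_sign inc xs es i * incidence inc (es ! i) x
      = of_bool (xs ! i = x) - of_bool (xs ! Suc i = x)" if "i < ?n" for i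
    using step_sign_cases[OF p that] by (elim disjE conjE) (simp_all add: incidence_def)
  have "outflow E inc (path_flow inc xs es) x
      = (\<Sum>i<?n. \<Sum>e\<in>E. if es ! i = e then step_sign inc xs es i * incidence inc (es ! i) x else 0)"
    unfolding outflow_def path_flow_def
    by (subst sum.swap[symmetric]) (auto simp: sum_distrib_right intro!: sum.cong)
  also have "\<dots> = (\<Sum>i<?n. of_bool (xs ! i = x) - of_bool (xs ! Suc i = x))"
    using edges assms(1) step by (auto intro!: sum.cong)
  also have "\<dots> = of_bool (xs ! 0 = x) - of_bool (xs ! ?n = x)"
    by (rule sum_lessThan_telescope')
  also have "\<dots> = of_bool (hd xs = x) - of_bool (last xs = x)"
    using ne len by (simp add: hd_conv_nth last_conv_nth)
  finally show ?thesis .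
qed

lemma path_or_closed_set:
  assumes mg: "multigraph V E inc" and u: "u \<in> V"
    and step_edge: "\<And>e a b. ok e a b \<Longrightarrow> e \<in> E \<and> (inc e = (a, b) \<or> inc e = (b, a))"
  obtains (path) xs es where "is_path V E inc xs es" "hd xs = u" "last xs = v"
      "\<forall>i<length es. ok (es ! i) (xs ! i) (xs ! Suc i)"
    | (closed) R where "R \<subseteq> V" "u \<in> R" "v \<notin> R" "\<And>e a b. a \<in> R \<Longrightarrow> ok e a b \<Longrightarrow> b \<in> R"
proof -
  let ?r = "\<lambda>a b. \<exists>e. ok e a b"
  have ends_in_V: "b \<in> V" if "ok e a b" for e a b
    using step_edge[OF that] mg unfolding multigraph_def by (metis fst_conv snd_conv)
  have reach_in_V: "?r\<^sup>*\<^sup>* u y \<Longrightarrow> y \<in> V" for y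
    by (induction rule: rtranclp_induct) (use u ends_in_V in auto)
  show thesis
  proof (cases "?r\<^sup>*\<^sup>* u v")
    case True
    then obtain xs where ne: "xs \<noteq> []" and ends: "hd xs = u" "last xs = v" and d: "distinct xs"
      and steps: "\<forall>i < length xs - 1. ?r (xs ! i) (xs ! Suc i)"
      by (rule rtranclp_imp_distinct_path)
    define es where "es = map (\<lambda>i. SOME e. ok e (xs ! i) (xs ! Suc i)) [0..<length xs - 1]"
    have ok: "\<forall>i<length es. ok (es ! i) (xs ! i) (xs ! Suc i)"
      using steps unfolding es_def by (auto intro: someI_ex)
    have "xs ! i \<in> V" if "i < length xs" for i
    proof (cases i)
      case 0
      then show ?thesis using u ends ne by (simp add: hd_conv_nth)
    next
      case (Suc j)
      then have "j < length es" using that by (simp add: es_def)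
      then show ?thesis using ok ends_in_V Suc by blast
    qed
    then have "set xs \<subseteq> V" by (auto simp: in_set_conv_nth)
    then have "is_path V E inc xs es"
      using ne d ok step_edge unfolding is_path_def by (auto simp: es_def)
    then show thesis using path ends ok by blast
  next
    case False
    then show thesis
      by (intro closed[of "{y. ?r\<^sup>*\<^sup>* u y}"]) (auto intro: reach_in_V rtranclp.rtrancl_into_rtrancl)
  qed
qed

definition cut_edges :: "'e set \<Rightarrow> ('e \<Rightarrow> 'v \<times> 'v) \<Rightarrow> 'v set \<Rightarrow> 'e set" where
  "cut_edges E inc S = {e \<in> E. (fst (inc e) \<in> S) \<noteq> (snd (inc e) \<in> S)}"

definition unit_flow :: "'v set \<Rightarrow> 'e set \<Rightarrow> ('e \<Rightarrow> 'v \<times> 'v) \<Rightarrow> 'v \<Rightarrow> 'v \<Rightarrow> ('e \<Rightarrow> int) \<Rightarrow> bool" where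
  "unit_flow V E inc u v f \<longleftrightarrow> (\<forall>e. f e \<in> {-1, 0, 1}) \<and> (\<forall>e. f e \<noteq> 0 \<longrightarrow> e \<in> E) \<and>
     (\<forall>x \<in> V - {u, v}. outflow E inc f x = 0)"

lemma sum_outflow_source_side:
  assumes "unit_flow V E inc u v f" "finite S" "S \<subseteq> V" "u \<in> S" "v \<notin> S"
  shows "(\<Sum>x\<in>S. outflow E inc f x) = outflow E inc f u"
proof -
  have "(\<Sum>x\<in>S - {u}. outflow E inc f x) = 0"
    using assms unfolding unit_flow_def by (intro sum.neutral) auto
  then show ?thesis using assms(2,4) by (simp add: sum.remove)
qed

lemma unit_flow_augment:
  assumes fl: "unit_flow V E inc u v f" and "finite E" and "u \<noteq> v"
    and p: "is_path V E inc xs es" "hd xs = u" "last xs = v"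
    and vals: "\<And>i. i < length es \<Longrightarrow> f (es ! i) + \<sigma> * step_sign inc xs es i \<in> {-1, 0, 1}"
  defines "g \<equiv> \<lambda>e. f e + \<sigma> * path_flow inc xs es e"
  shows "unit_flow V E inc u v g" "outflow E inc g u = outflow E inc f u + \<sigma>"
proof -
  have outflow_g: "outflow E inc g x
      = outflow E inc f x + \<sigma> * (of_bool (u = x) - of_bool (v = x))" for x
    using outflow_path_flow[OF \<open>finite E\<close> p(1)] p(2,3) by (simp add: g_def outflow_add_scaled)
  have "g e \<in> {-1, 0, 1} \<and> (g e \<noteq> 0 \<longrightarrow> e \<in> E)" for e
  proof (cases "e \<in> set es")
    case True
    then obtain i where "i < length es" "e = es ! i" by (auto simp: in_set_conv_nth)
    then show ?thesis
      using vals path_flow_nth[OF p(1)] p(1) by (auto simp: g_def is_path_def)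
  next
    case False
    then show ?thesis using fl by (simp add: g_def path_flow_notin unit_flow_def)
  qed
  then show "unit_flow V E inc u v g"
    using fl outflow_g by (auto simp: unit_flow_def)
  show "outflow E inc g u = outflow E inc f u + \<sigma>"
    using outflow_g \<open>u \<noteq> v\<close> by simp
qed

definition residual_step :: "'e set \<Rightarrow> ('e \<Rightarrow> 'v \<times> 'v) \<Rightarrow> ('e \<Rightarrow> int) \<Rightarrow> 'e \<Rightarrow> 'v \<Rightarrow> 'v \<Rightarrow> bool" where
  "residual_step E inc f e a b \<longleftrightarrow>
     e \<in> E \<and> (inc e = (a, b) \<and> f e \<le> 0 \<or> inc e = (b, a) \<and> f e \<ge> 0)"

definition flow_step :: "'e set \<Rightarrow> ('e \<Rightarrow> 'v \<times> 'v) \<Rightarrow> ('e \<Rightarrow> int) \<Rightarrow> 'e \<Rightarrow> 'v \<Rightarrow> 'v \<Rightarrow> bool" where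
  "flow_step E inc f e a b \<longleftrightarrow> e \<in> E \<and> (inc e = (a, b) \<and> f e = 1 \<or> inc e = (b, a) \<and> f e = -1)"

lemma residual_path_augmentable:
  assumes "unit_flow V E inc u v f" and p: "is_path V E inc xs es" and i: "i < length es"
    and "residual_step E inc f (es ! i) (xs ! i) (xs ! Suc i)"
  shows "f (es ! i) + step_sign inc xs es i \<in> {-1, 0, 1}"
proof -
  have "xs ! i \<noteq> xs ! Suc i"
    using p i by (auto simp: is_path_def nth_eq_iff_index_eq)
  then have "step_sign inc xs es i = 1 \<Longrightarrow> f (es ! i) \<le> 0"
    and "step_sign inc xs es i = -1 \<Longrightarrow> f (es ! i) \<ge> 0"
    using step_sign_cases[OF p i] assms(4) by (auto simp: residual_step_def)
  moreover have "f (es ! i) \<in> {-1, 0, 1}" using assms(1) by (simp add: unit_flow_def)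
  ultimately show ?thesis using step_sign_cases[OF p i] by auto
qed

lemma flow_path_step_sign:
  assumes p: "is_path V E inc xs es" and i: "i < length es"
    and "flow_step E inc f (es ! i) (xs ! i) (xs ! Suc i)"
  shows "f (es ! i) = step_sign inc xs es i"
proof -
  have "xs ! i \<noteq> xs ! Suc i"
    using p i by (auto simp: is_path_def nth_eq_iff_index_eq)
  then show ?thesis using step_sign_cases[OF p i] assms(3) by (auto simp: flow_step_def)
qed

lemma outflow_eq_card_cut_if_residual_closed:
  assumes fl: "unit_flow V E inc u v f" and fin: "finite E" "finite R"
    and R: "R \<subseteq> V" "u \<in> R" "v \<notin> R"
    and closed: "\<And>e a b. a \<in> R \<Longrightarrow> residual_step E inc f e a b \<Longrightarrow> b \<in> R"
  shows "outflow E inc f u = int (card (cut_edges E inc R))"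
proof -
  have saturated: "f e * (of_bool (fst (inc e) \<in> R) - of_bool (snd (inc e) \<in> R))
      = of_bool (e \<in> cut_edges E inc R)" if "e \<in> E" for e
  proof -
    obtain a b where ab: "inc e = (a, b)" by fastforce
    have f_vals: "f e \<in> {-1, 0, 1}" using fl by (simp add: unit_flow_def)
    have "f e = 1" if "a \<in> R" "b \<notin> R"
      using closed[of a e b] that \<open>e \<in> E\<close> ab f_vals by (auto simp: residual_step_def)
    moreover have "f e = -1" if "b \<in> R" "a \<notin> R"
      using closed[of b e a] that \<open>e \<in> E\<close> ab f_vals by (auto simp: residual_step_def)
    ultimately show ?thesis using \<open>e \<in> E\<close> ab by (auto simp: cut_edges_def)
  qed
  have "outflow E inc f u = (\<Sum>x\<in>R. outflow E inc f x)"
    using sum_outflow_source_side[OF fl fin(2) R] by simp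
  also have "\<dots> = (\<Sum>e\<in>E. of_bool (e \<in> cut_edges E inc R))"
    using saturated by (simp add: sum_outflow[OF fin])
  also have "\<dots> = int (card (cut_edges E inc R))"
    using fin(1) by (simp add: of_bool_def cut_edges_def flip: sum.inter_filter)
  finally show ?thesis .
qed

lemma outflow_nonpos_if_flow_closed:
  assumes fl: "unit_flow V E inc u v f" and fin: "finite E" "finite R"
    and R: "R \<subseteq> V" "u \<in> R" "v \<notin> R"
    and closed: "\<And>e a b. a \<in> R \<Longrightarrow> flow_step E inc f e a b \<Longrightarrow> b \<in> R"
  shows "outflow E inc f u \<le> 0"
proof -
  have no_exit: "f e * (of_bool (fst (inc e) \<in> R) - of_bool (snd (inc e) \<in> R)) \<le> 0"
    if "e \<in> E" for e
  proof -
    obtain a b where ab: "inc e = (a, b)" by fastforce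
    have "f e \<in> {-1, 0, 1}" using fl by (simp add: unit_flow_def)
    moreover have "f e \<noteq> 1" if "a \<in> R" "b \<notin> R"
      using closed[of a e b] that \<open>e \<in> E\<close> ab by (auto simp: flow_step_def)
    moreover have "f e \<noteq> -1" if "b \<in> R" "a \<notin> R"
      using closed[of b e a] that \<open>e \<in> E\<close> ab by (auto simp: flow_step_def)
    ultimately show ?thesis using ab by auto
  qed
  have "outflow E inc f u = (\<Sum>x\<in>R. outflow E inc f x)"
    using sum_outflow_source_side[OF fl fin(2) R] by simp
  also have "\<dots> \<le> 0"
    unfolding sum_outflow[OF fin] using no_exit by (intro sum_nonpos) auto
  finally show ?thesis .
qed

lemma unit_flow_of_large_cuts:
  assumes mg: "multigraph V E inc" and u: "u \<in> V" and "u \<noteq> v"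
    and cuts: "\<And>S. S \<subseteq> V \<Longrightarrow> u \<in> S \<Longrightarrow> v \<notin> S \<Longrightarrow> k \<le> card (cut_edges E inc S)"
  shows "j \<le> k \<Longrightarrow> \<exists>f. unit_flow V E inc u v f \<and> outflow E inc f u = int j"
proof (induction j)
  case 0
  show ?case by (rule exI[of _ "\<lambda>_. 0"]) (simp add: unit_flow_def outflow_def)
next
  case (Suc j)
  then obtain f where fl: "unit_flow V E inc u v f" and val: "outflow E inc f u = int j" by auto
  have fin: "finite E" "finite V" using mg by (auto simp: multigraph_def)
  show ?case
  proof (rule path_or_closed_set[OF mg u, of "residual_step E inc f" v])
    show "residual_step E inc f e a b \<Longrightarrow> e \<in> E \<and> (inc e = (a, b) \<or> inc e = (b, a))" for e a b
      by (auto simp: residual_step_def)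
  next
    fix xs es
    assume p: "is_path V E inc xs es" "hd xs = u" "last xs = v"
      and "\<forall>i<length es. residual_step E inc f (es ! i) (xs ! i) (xs ! Suc i)"
    then have "f (es ! i) + 1 * step_sign inc xs es i \<in> {-1, 0, 1}" if "i < length es" for i
      using residual_path_augmentable[OF fl p(1) that] that by simp
    from unit_flow_augment[OF fl fin(1) \<open>u \<noteq> v\<close> p this] val show ?case by auto
  next
    fix R
    assume "R \<subseteq> V" "u \<in> R" "v \<notin> R"
      and "\<And>e a b. a \<in> R \<Longrightarrow> residual_step E inc f e a b \<Longrightarrow> b \<in> R"
    with outflow_eq_card_cut_if_residual_closed[OF fl fin(1)] finite_subset[OF _ fin(2)]
    have "int j = int (card (cut_edges E inc R))" using val by metis
    then show ?case using cuts[OF \<open>R \<subseteq> V\<close> \<open>u \<in> R\<close> \<open>v \<notin> R\<close>] Suc.prems by simp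
  qed
qed

lemma edge_disjoint_paths_of_unit_flow:
  assumes mg: "multigraph V E inc" and u: "u \<in> V" and "u \<noteq> v"
  shows "unit_flow V E inc u v f \<Longrightarrow> outflow E inc f u = int j \<Longrightarrow>
    \<exists>P :: nat \<Rightarrow> 'v list \<times> 'e list.
      (\<forall>i<j. is_path V E inc (fst (P i)) (snd (P i)) \<and> hd (fst (P i)) = u \<and> last (fst (P i)) = v
             \<and> (\<forall>e \<in> set (snd (P i)). f e \<noteq> 0)) \<and>
      (\<forall>i<j. \<forall>i'<j. i \<noteq> i' \<longrightarrow> set (snd (P i)) \<inter> set (snd (P i')) = {})"
proof (induction j arbitrary: f)
  case 0
  show ?case by simp
next
  case (Suc j)
  note fl = Suc.prems(1)
  have fin: "finite E" "finite V" using mg by (auto simp: multigraph_def)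
  show ?case
  proof (rule path_or_closed_set[OF mg u, of "flow_step E inc f" v])
    show "flow_step E inc f e a b \<Longrightarrow> e \<in> E \<and> (inc e = (a, b) \<or> inc e = (b, a))" for e a b
      by (auto simp: flow_step_def)
  next
    fix xs es
    assume p: "is_path V E inc xs es" "hd xs = u" "last xs = v"
      and "\<forall>i<length es. flow_step E inc f (es ! i) (xs ! i) (xs ! Suc i)"
    then have carried: "f (es ! i) = step_sign inc xs es i" if "i < length es" for i
      using flow_path_step_sign[OF p(1) that] that by blast
    define g where "g e = f e + -1 * path_flow inc xs es e" for e
    have "f (es ! i) + -1 * step_sign inc xs es i \<in> {-1, 0, 1}" if "i < length es" for i
      using carried[OF that] by simp
    from unit_flow_augment[OF fl fin(1) \<open>u \<noteq> v\<close> p this, folded g_def] Suc.prems(2)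
    obtain P where P: "\<forall>i<j. is_path V E inc (fst (P i)) (snd (P i)) \<and> hd (fst (P i)) = u
          \<and> last (fst (P i)) = v \<and> (\<forall>e \<in> set (snd (P i)). g e \<noteq> 0)"
      and disj: "\<forall>i<j. \<forall>i'<j. i \<noteq> i' \<longrightarrow> set (snd (P i)) \<inter> set (snd (P i')) = {}"
      using Suc.IH by fastforce
    have g_support: "g e \<noteq> 0 \<longleftrightarrow> f e \<noteq> 0 \<and> e \<notin> set es" for e
    proof (cases "e \<in> set es")
      case True
      then obtain i where "i < length es" "e = es ! i" by (auto simp: in_set_conv_nth)
      then show ?thesis using carried path_flow_nth[OF p(1)] step_sign_cases[OF p(1)]
        by (force simp: g_def)
    qed (simp add: g_def path_flow_notin)
    have "f e \<noteq> 0" if "e \<in> set es" for e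
      using that carried step_sign_cases[OF p(1)] by (force simp: in_set_conv_nth)
    then show ?case using P p disj g_support
      by (intro exI[of _ "case_nat (xs, es) P"]) (auto split: nat.split simp: less_Suc_eq_0_disj)
  next
    fix R
    assume "R \<subseteq> V" "u \<in> R" "v \<notin> R" and "\<And>e a b. a \<in> R \<Longrightarrow> flow_step E inc f e a b \<Longrightarrow> b \<in> R"
    with outflow_nonpos_if_flow_closed[OF fl fin(1)] finite_subset[OF _ fin(2)]
    have "outflow E inc f u \<le> 0" by metis
    then show ?case using Suc.prems(2) by simp
  qed
qed

lemma small_cut_if_not_k_equiv:
  assumes mg: "multigraph V E inc" and "u \<in> V" and "\<not> k_equiv V E inc k u v"
  obtains S where "S \<subseteq> V" "u \<in> S" "v \<notin> S" "card (cut_edges E inc S) < k"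
proof -
  have "u \<noteq> v" using assms(3) by (auto simp: k_equiv_def)
  have "\<exists>S \<subseteq> V. u \<in> S \<and> v \<notin> S \<and> card (cut_edges E inc S) < k"
  proof (rule ccontr)
    assume "\<not> ?thesis"
    then have "\<And>S. S \<subseteq> V \<Longrightarrow> u \<in> S \<Longrightarrow> v \<notin> S \<Longrightarrow> k \<le> card (cut_edges E inc S)"
      by (meson not_le)
    from unit_flow_of_large_cuts[OF mg \<open>u \<in> V\<close> \<open>u \<noteq> v\<close> this]
    obtain f where "unit_flow V E inc u v f" "outflow E inc f u = int k" by blast
    from edge_disjoint_paths_of_unit_flow[OF mg \<open>u \<in> V\<close> \<open>u \<noteq> v\<close> this]
    have "k_equiv V E inc k u v" unfolding k_equiv_def by blast
    with assms(3) show False by contradiction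
  qed
  then show thesis using that by blast
qed

lemma path_crosses_cut:
  assumes p: "is_path V E inc xs es" and "(hd xs \<in> S) \<noteq> (last xs \<in> S)"
  shows "set es \<inter> cut_edges E inc S \<noteq> {}"
proof -
  have ne: "xs \<noteq> []" and len: "length es = length xs - 1" using p by (auto simp: is_path_def)
  have "\<exists>i<length es. (xs ! i \<in> S) \<noteq> (xs ! Suc i \<in> S)"
  proof (rule ccontr)
    assume "\<not> ?thesis"
    then have same: "\<And>i. i < length es \<Longrightarrow> (xs ! Suc i \<in> S) = (xs ! i \<in> S)" by blast
    have from_start: "i \<le> length es \<Longrightarrow> (xs ! i \<in> S) = (xs ! 0 \<in> S)" for i
    proof (induction i)
      case (Suc i)
      then show ?case using same[of i] by simp
    qed simp
    from from_start[of "length es"] show False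
      using assms(2) ne len by (simp add: hd_conv_nth last_conv_nth)
  qed
  then obtain i where i: "i < length es" "(xs ! i \<in> S) \<noteq> (xs ! Suc i \<in> S)" by blast
  then have "es ! i \<in> E" "inc (es ! i) = (xs ! i, xs ! Suc i) \<or> inc (es ! i) = (xs ! Suc i, xs ! i)"
    using p unfolding is_path_def by auto
  then have "es ! i \<in> cut_edges E inc S"
    using i(2) unfolding cut_edges_def by auto
  with i(1) show ?thesis by (meson disjoint_iff nth_mem)
qed

lemma k_equiv_same_side:
  assumes mg: "multigraph V E inc" and "card (cut_edges E inc S) < k"
    and "k_equiv V E inc k u w"
  shows "u \<in> S \<longleftrightarrow> w \<in> S"
proof (rule ccontr)
  assume side: "(u \<in> S) \<noteq> (w \<in> S)"
  then obtain P where
    P: "\<forall>i<k. is_path V E inc (fst (P i)) (snd (P i)) \<and> hd (fst (P i)) = u \<and> last (fst (P i)) = w"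
    and disj: "\<forall>i<k. \<forall>j<k. i \<noteq> j \<longrightarrow> set (snd (P i)) \<inter> set (snd (P j)) = {}"
    using assms(3) unfolding k_equiv_def by blast
  \<comment> \<open>each of the k edge-disjoint paths contributes its own cut edge\<close>
  have "\<forall>i<k. \<exists>e. e \<in> set (snd (P i)) \<inter> cut_edges E inc S"
    using path_crosses_cut P side by (metis ex_in_conv)
  then obtain ch where ch: "\<forall>i<k. ch i \<in> set (snd (P i)) \<inter> cut_edges E inc S"
    by metis
  have "inj_on ch {..<k}"
    using ch disj by (intro inj_onI) (metis IntE disjoint_iff lessThan_iff)
  moreover have "ch ` {..<k} \<subseteq> cut_edges E inc S" using ch by auto
  moreover have "finite (cut_edges E inc S)" using mg by (auto simp: multigraph_def cut_edges_def)
  ultimately have "k \<le> card (cut_edges E inc S)"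
    by (metis card_image card_lessThan card_mono)
  then show False using assms(2) by simp
qed

lemma AB_path_mono: "AB_path V E inc A B vs es \<Longrightarrow> E \<subseteq> E' \<Longrightarrow> AB_path V E' inc A B vs es"
  unfolding AB_path_def is_path_def by blast

definition pairwise_separated :: "'v set \<Rightarrow> 'e set \<Rightarrow> ('e \<Rightarrow> 'v \<times> 'v) \<Rightarrow> ('i \<Rightarrow> 'v set) \<Rightarrow> 'i set \<Rightarrow> bool" where
  "pairwise_separated V E inc A I \<longleftrightarrow>
     (\<forall>i\<in>I. \<forall>j\<in>I. i \<noteq> j \<longrightarrow> \<not> (\<exists>vs es. AB_path V E inc (A i) (A j) vs es))"

lemma pairwise_separated_mono:
  "pairwise_separated V E inc A I \<Longrightarrow> E' \<subseteq> E \<Longrightarrow> pairwise_separated V E' inc A I"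
  unfolding pairwise_separated_def by (meson AB_path_mono)

lemma pairwise_separated_split:
  assumes "pairwise_separated V E inc A {l \<in> I. c l \<in> S}"
    and "pairwise_separated V E inc A {l \<in> I. c l \<notin> S}"
    and "cut_edges E inc S = {}"
    and side: "\<And>l a. l \<in> I \<Longrightarrow> a \<in> A l \<Longrightarrow> a \<in> S \<longleftrightarrow> c l \<in> S"
  shows "pairwise_separated V E inc A I"
  unfolding pairwise_separated_def
proof (intro ballI impI notI)
  fix l l' assume l: "l \<in> I" "l' \<in> I" "l \<noteq> l'"
  assume "\<exists>vs es. AB_path V E inc (A l) (A l') vs es"
  then obtain vs es where AB: "AB_path V E inc (A l) (A l') vs es" by blast
  show False
  proof (cases "c l \<in> S \<longleftrightarrow> c l' \<in> S")
    case True
    then have "l \<in> {l \<in> I. c l \<in> S} \<and> l' \<in> {l \<in> I. c l \<in> S}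
        \<or> l \<in> {l \<in> I. c l \<notin> S} \<and> l' \<in> {l \<in> I. c l \<notin> S}"
      using l by blast
    then show False using assms(1,2) l(3) AB unfolding pairwise_separated_def by blast
  next
    case False
    have path: "is_path V E inc vs es" and "hd vs \<in> A l" "last vs \<in> A l'"
      using AB unfolding AB_path_def by auto
    with False have "(hd vs \<in> S) \<noteq> (last vs \<in> S)"
      using side l by blast
    from path_crosses_cut[OF path this] assms(3) show False by simp
  qed
qed

lemma separating_edge_set:
  assumes mg: "multigraph V E inc" and "finite I"
    and "\<And>i. i \<in> I \<Longrightarrow> c i \<in> V"
    and "\<And>i a. i \<in> I \<Longrightarrow> a \<in> A i \<Longrightarrow> k_equiv V E inc k a (c i)"
    and "\<And>i j. i \<in> I \<Longrightarrow> j \<in> I \<Longrightarrow> i \<noteq> j \<Longrightarrow> \<not> k_equiv V E inc k (c i) (c j)"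
  shows "\<exists>X \<subseteq> E. card X \<le> (card I - 1) * (k - 1) \<and> pairwise_separated V (E - X) inc A I"
  using assms(2-)
proof (induction "card I" arbitrary: I rule: less_induct)
  case less
  show ?case
  proof (cases "\<exists>i\<in>I. \<exists>j\<in>I. i \<noteq> j")
    case False
    then show ?thesis by (intro exI[of _ "{}"]) (auto simp: pairwise_separated_def)
  next
    case True
    then obtain i j where ij: "i \<in> I" "j \<in> I" "i \<noteq> j" by blast
    obtain S where S: "S \<subseteq> V" "c i \<in> S" "c j \<notin> S" "card (cut_edges E inc S) < k"
      using small_cut_if_not_k_equiv[OF mg] less.prems ij by metis
    define I1 where "I1 = {l \<in> I. c l \<in> S}"
    define I2 where "I2 = {l \<in> I. c l \<notin> S}"
    have parts: "I = I1 \<union> I2" "I1 \<inter> I2 = {}" "i \<in> I1" "j \<in> I2"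
      using ij S by (auto simp: I1_def I2_def)
    then have card_I: "card I = card I1 + card I2" and "card I1 \<ge> 1" "card I2 \<ge> 1"
      using \<open>finite I\<close> by (auto simp: card_Un_disjoint Suc_le_eq card_gt_0_iff)
    have IH: "\<exists>X \<subseteq> E. card X \<le> (card J - 1) * (k - 1) \<and> pairwise_separated V (E - X) inc A J"
      if "J \<subseteq> I" "card J < card I" for J
      using that(1) less.prems finite_subset[OF that(1), OF \<open>finite I\<close>]
      by (intro less.hyps[OF that(2)]) blast+
    obtain X1 where X1: "X1 \<subseteq> E" "card X1 \<le> (card I1 - 1) * (k - 1)"
      "pairwise_separated V (E - X1) inc A I1"
      using IH[of I1] parts card_I \<open>card I2 \<ge> 1\<close> by auto
    obtain X2 where X2: "X2 \<subseteq> E" "card X2 \<le> (card I2 - 1) * (k - 1)"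
      "pairwise_separated V (E - X2) inc A I2"
      using IH[of I2] parts card_I \<open>card I1 \<ge> 1\<close> by auto
    define X where "X = X1 \<union> X2 \<union> cut_edges E inc S"
    have "card X \<le> card X1 + card X2 + card (cut_edges E inc S)"
      unfolding X_def by (meson card_Un_le add_le_mono order_trans le_refl)
    also have "\<dots> \<le> (card I1 - 1) * (k - 1) + (card I2 - 1) * (k - 1) + (k - 1)"
      using X1(2) X2(2) S(4) by linarith
    also have "\<dots> = (card I - 1) * (k - 1)"
    proof -
      obtain a b where "card I1 = Suc a" "card I2 = Suc b"
        using \<open>card I1 \<ge> 1\<close> \<open>card I2 \<ge> 1\<close> by (metis Suc_le_D One_nat_def)
      then show ?thesis using card_I by (simp add: add_mult_distrib)
    qed
    finally have "card X \<le> (card I - 1) * (k - 1)" .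
    moreover have "X \<subseteq> E" using X1(1) X2(1) by (auto simp: X_def cut_edges_def)
    moreover have "pairwise_separated V (E - X) inc A I"
    proof (rule pairwise_separated_split)
      show "pairwise_separated V (E - X) inc A {l \<in> I. c l \<in> S}"
        using pairwise_separated_mono[OF X1(3), of "E - X"] unfolding X_def I1_def by blast
      show "pairwise_separated V (E - X) inc A {l \<in> I. c l \<notin> S}"
        using pairwise_separated_mono[OF X2(3), of "E - X"] unfolding X_def I2_def by blast
      show "cut_edges (E - X) inc S = {}" by (auto simp: X_def cut_edges_def)
      show "a \<in> S \<longleftrightarrow> c l \<in> S" if "l \<in> I" "a \<in> A l" for l a
        using k_equiv_same_side[OF mg S(4)] less.prems that by blast
    qed
    ultimately show ?thesis by blast
  qed
qed

theorem lemma10: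
  fixes V :: "'v set" and E :: "'e set" and inc :: "'e \<Rightarrow> 'v \<times> 'v"
    and k p :: nat and A :: "nat \<Rightarrow> 'v set" and c :: "nat \<Rightarrow> 'v"
  assumes "multigraph V E inc"
    and "k \<ge> 1" and "p \<ge> 1"
    and "\<forall>i<p. c i \<in> V \<and> A i \<subseteq> {v \<in> V. k_equiv V E inc k v (c i)}"
    and "\<forall>i<p. \<forall>j<p. i \<noteq> j \<longrightarrow> \<not> k_equiv V E inc k (c i) (c j)"
  shows "\<exists>X \<subseteq> E. card X \<le> (p - 1) * (k - 1) \<and>
           (\<forall>i<p. \<forall>j<p. i \<noteq> j \<longrightarrow>
              \<not> (\<exists>vs es. AB_path V (E - X) inc (A i) (A j) vs es))"
proof -
  have "\<exists>X \<subseteq> E. card X \<le> (card {..<p} - 1) * (k - 1) \<and> pairwise_separated V (E - X) inc A {..<p}"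
    by (rule separating_edge_set[OF assms(1)]) (use assms(4,5) in blast)+
  then show ?thesis by (simp only: pairwise_separated_def lessThan_iff Ball_def card_lessThan)
qed

end
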